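(* The functions $F_\iota(r,s,i,j)=j\,L^\iota(r)\,i$, $\iota=1,\dots,n$, form a regular sequence in the coordinate ring $\mathbb{C}[T^*(\mathfrak{b}\times\mathbb{C}^n)^{rss}]$.
   Context: $\mathfrak{b}$ is the space of upper triangular complex $n\times n$ matrices, $\mathfrak{b}^*=\mathfrak{gl}_n/\mathfrak{n}^+$ ($\mathfrak{n}^+$ strictly upper triangular), and $T^*(\mathfrak{b}\times\mathbb{C}^n)^{rss}=\mathfrak{b}^{rss}\times\mathfrak{b}^*\times\mathbb{C}^n\times(\mathbb{C}^n)^*$, where $\mathfrak{b}^{rss}$ is the open set of $r\in\mathfrak{b}$ with pairwise distinct diagonal entries; $i$ is a column vector and $j$ a row vector. $L^\iota(r)=\big[\operatorname{tr}\prod_{k\ne\iota}(r-r_{kk}I)\big]^{-1}\prod_{k\ne\iota}(r-r_{kk}I)$ (the scalar equals $\prod_{k\ne\iota}(r_{\iota\iota}-r_{kk})\neq0$). *)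

theory Defs
  imports Complex_Main
begin

text \<open>Coordinates on T^*(b x C^n): r_{kl} (k \<le> l) on b, s_{kl} (k \<ge> l) on b^* = gl_n/n^+,
  i_k (column vector), j_k (row vector). Indices are 0-based (0..n-1).\<close>
datatype var = Rv nat nat | Sv nat nat | Iv nat | Jv nat

fun valid_var :: "nat \<Rightarrow> var \<Rightarrow> bool" where
  "valid_var n (Rv k l) = (k \<le> l \<and> l < n)"
| "valid_var n (Sv k l) = (l \<le> k \<and> k < n)"
| "valid_var n (Iv k) = (k < n)"
| "valid_var n (Jv k) = (k < n)"

type_synonym point = "var \<Rightarrow> complex"

inductive_set polyfun :: "(point \<Rightarrow> complex) set" where
  pconst: "(\<lambda>v. c) \<in> polyfun"
| pvar: "(\<lambda>v. v x) \<in> polyfun"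
| padd: "p \<in> polyfun \<Longrightarrow> q \<in> polyfun \<Longrightarrow> (\<lambda>v. p v + q v) \<in> polyfun"
| pmult: "p \<in> polyfun \<Longrightarrow> q \<in> polyfun \<Longrightarrow> (\<lambda>v. p v * q v) \<in> polyfun"

definition rmat :: "point \<Rightarrow> nat \<Rightarrow> nat \<Rightarrow> complex" where
  "rmat v a c = (if a \<le> c then v (Rv a c) else 0)"

definition disc :: "nat \<Rightarrow> point \<Rightarrow> complex" where
  "disc n v = (\<Prod>(a,b)\<in>{(a,b). a < b \<and> b < n}. v (Rv a a) - v (Rv b b))"

text \<open>The space T^*(b x C^n)^{rss}: all points, with non-coordinate variables set to 0
  and pairwise distinct diagonal entries of r.\<close>
definition Xrss :: "nat \<Rightarrow> point set" where
  "Xrss n = {v. (\<forall>x. \<not> valid_var n x \<longrightarrow> v x = 0) \<and>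
                (\<forall>a b. a < n \<longrightarrow> b < n \<longrightarrow> a \<noteq> b \<longrightarrow> v (Rv a a) \<noteq> v (Rv b b))}"

text \<open>Regular functions on Xrss (its coordinate ring: polynomials localized at disc),
  represented as functions on Xrss.\<close>
definition regular_fun :: "nat \<Rightarrow> (point \<Rightarrow> complex) \<Rightarrow> bool" where
  "regular_fun n f \<longleftrightarrow> (\<exists>p\<in>polyfun. \<exists>m::nat. \<forall>v\<in>Xrss n. f v = p v / disc n v ^ m)"

definition matmul :: "nat \<Rightarrow> (nat \<Rightarrow> nat \<Rightarrow> complex) \<Rightarrow> (nat \<Rightarrow> nat \<Rightarrow> complex) \<Rightarrow> nat \<Rightarrow> nat \<Rightarrow> complex" where
  "matmul n A B = (\<lambda>a c. \<Sum>b<n. A a b * B b c)"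

definition idmat :: "nat \<Rightarrow> nat \<Rightarrow> complex" where
  "idmat = (\<lambda>a c. if a = c then 1 else 0)"

definition mtrace :: "nat \<Rightarrow> (nat \<Rightarrow> nat \<Rightarrow> complex) \<Rightarrow> complex" where
  "mtrace n A = (\<Sum>a<n. A a a)"

text \<open>prod_{k \<noteq> io} (r - r_{kk} I) (the factors commute).\<close>
definition Pmat :: "nat \<Rightarrow> nat \<Rightarrow> point \<Rightarrow> nat \<Rightarrow> nat \<Rightarrow> complex" where
  "Pmat n io v = foldr (\<lambda>k M. matmul n (\<lambda>a c. rmat v a c - v (Rv k k) * idmat a c) M)
                        (filter (\<lambda>k. k \<noteq> io) [0..<n]) idmat"

definition Lmat :: "nat \<Rightarrow> nat \<Rightarrow> point \<Rightarrow> nat \<Rightarrow> nat \<Rightarrow> complex" where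
  "Lmat n io v = (\<lambda>a c. Pmat n io v a c / mtrace n (Pmat n io v))"

definition Ffun :: "nat \<Rightarrow> nat \<Rightarrow> point \<Rightarrow> complex" where
  "Ffun n io v = (\<Sum>a<n. \<Sum>c<n. v (Jv a) * Lmat n io v a c * v (Iv c))"

definition in_ideal :: "nat \<Rightarrow> (nat \<Rightarrow> point \<Rightarrow> complex) \<Rightarrow> nat \<Rightarrow> (point \<Rightarrow> complex) \<Rightarrow> bool" where
  "in_ideal n F k g \<longleftrightarrow> (\<exists>a. (\<forall>t<k. regular_fun n (a t)) \<and>
       (\<forall>v\<in>Xrss n. g v = (\<Sum>t<k. a t v * F t v)))"

definition regular_sequence :: "nat \<Rightarrow> (nat \<Rightarrow> point \<Rightarrow> complex) \<Rightarrow> nat \<Rightarrow> bool" where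
  "regular_sequence n F m \<longleftrightarrow>
     (\<forall>t<m. regular_fun n (F t)) \<and>
     (\<forall>k<m. \<forall>g. regular_fun n g \<longrightarrow> in_ideal n F k (\<lambda>v. g v * F k v) \<longrightarrow> in_ideal n F k g) \<and>
     \<not> in_ideal n F m (\<lambda>v. 1)"

end

theory Submission
  imports Defs
begin

(* L^t is the spectral projector of the triangular matrix r onto its r_tt-eigenline, so it has
   rank one and F_t = (j L^t e_t)(e_t^T L^t i) splits into a form linear in j and one linear in i.
   Translating j along e_k kills the first factor of F_k, translating i along the eigenvector L^k e_k
   kills the second, and neither changes F_t for t < k: (L^t)_kt = 0 by triangularity, and left and
   right eigenvectors of r for distinct eigenvalues are orthogonal.
   If g F_k = sum_{t<k} a_t F_t, the second difference of each a_t under the two translations is a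
   multiple q_t F_k, and evaluating the relation at the translated points gives
   (g - sum_{t<k} q_t F_t) F_k = 0. F_k is not a zero divisor, since on a suitable line through any
   point it has only two zeros, so g = sum_{t<k} q_t F_t. Finally all F_t vanish where i = j = 0. *)

section \<open>Matrices indexed by \<open>{..<n}\<close>\<close>

lemma sum_eq_single:
  assumes "finite A" "d \<in> A" "\<And>b. b \<in> A \<Longrightarrow> b \<noteq> d \<Longrightarrow> f b = 0"
  shows "sum f A = f d"
  using sum.mono_neutral_right[of A "{d}" f] assms by auto

text \<open>Matrices are total functions on \<open>nat \<times> nat\<close> but \<open>matmul\<close> only sees their
  \<open>n \<times> n\<close> blocks, so matrix identities hold up to agreement on that block.\<close>
definition mat_eq :: "nat \<Rightarrow> (nat \<Rightarrow> nat \<Rightarrow> complex) \<Rightarrow> (nat \<Rightarrow> nat \<Rightarrow> complex) \<Rightarrow> bool" where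
  "mat_eq n A B \<longleftrightarrow> (\<forall>a<n. \<forall>c<n. A a c = B a c)"

lemma mat_eq_refl: "mat_eq n A A"
  by (simp add: mat_eq_def)

lemma mat_eq_sym: "mat_eq n A B \<Longrightarrow> mat_eq n B A"
  by (simp add: mat_eq_def)

lemma mat_eq_trans [trans]: "mat_eq n A B \<Longrightarrow> mat_eq n B C \<Longrightarrow> mat_eq n A C"
  by (simp add: mat_eq_def)

lemma matmul_cong: "mat_eq n A A' \<Longrightarrow> mat_eq n B B' \<Longrightarrow> mat_eq n (matmul n A B) (matmul n A' B')"
  by (simp add: mat_eq_def matmul_def)

lemma matmul_assoc: "matmul n (matmul n A B) C = matmul n A (matmul n B C)"
  unfolding matmul_def
  by (auto simp: sum_distrib_left sum_distrib_right mult.assoc intro!: ext sum.swap[THEN trans])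

lemma matmul_idmat_left: "a < n \<Longrightarrow> matmul n idmat B a c = B a c"
  unfolding matmul_def idmat_def by (subst sum_eq_single[of _ a]) auto

lemma matmul_idmat_right: "c < n \<Longrightarrow> matmul n A idmat a c = A a c"
  unfolding matmul_def idmat_def by (subst sum_eq_single[of _ c]) auto

definition upper_triangular :: "nat \<Rightarrow> (nat \<Rightarrow> nat \<Rightarrow> complex) \<Rightarrow> bool" where
  "upper_triangular n A \<longleftrightarrow> (\<forall>a<n. \<forall>c<n. c < a \<longrightarrow> A a c = 0)"

lemma upper_triangular_idmat: "upper_triangular n idmat"
  by (simp add: upper_triangular_def idmat_def)

lemma upper_triangular_matmul:
  assumes "upper_triangular n A" "upper_triangular n B"
  shows "upper_triangular n (matmul n A B)"
  unfolding upper_triangular_def matmul_def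
proof (intro allI impI sum.neutral ballI)
  fix a c b assume "a < n" "c < n" "c < a" "b \<in> {..<n}"
  then show "A a b * B b c = 0"
    using assms unfolding upper_triangular_def by (cases "b < a") auto
qed

lemma matmul_diag:
  assumes "upper_triangular n A" "upper_triangular n B" "a < n"
  shows "matmul n A B a a = A a a * B a a"
  unfolding matmul_def
proof (rule sum_eq_single)
  fix b assume "b \<in> {..<n}" "b \<noteq> a"
  then show "A a b * B b a = 0"
    using assms unfolding upper_triangular_def by (cases "b < a") auto
qed (use assms in auto)

section \<open>Products of the factors \<open>r - r\<^sub>k\<^sub>k I\<close>\<close>

definition rfactor :: "point \<Rightarrow> nat \<Rightarrow> nat \<Rightarrow> nat \<Rightarrow> complex" where
  "rfactor v k = (\<lambda>a c. rmat v a c - v (Rv k k) * idmat a c)"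

definition rprod :: "nat \<Rightarrow> point \<Rightarrow> nat list \<Rightarrow> nat \<Rightarrow> nat \<Rightarrow> complex" where
  "rprod n v ks = foldr (\<lambda>k M. matmul n (rfactor v k) M) ks idmat"

lemma rprod_Nil: "rprod n v [] = idmat"
  by (simp add: rprod_def)

lemma rprod_Cons: "rprod n v (k # ks) = matmul n (rfactor v k) (rprod n v ks)"
  by (simp add: rprod_def)

lemma Pmat_eq_rprod: "Pmat n io v = rprod n v (filter (\<lambda>k. k \<noteq> io) [0..<n])"
  by (simp add: Pmat_def rprod_def rfactor_def)

lemma rprod_append: "mat_eq n (rprod n v (ks @ ls)) (matmul n (rprod n v ks) (rprod n v ls))"
proof (induction ks)
  case Nil
  show ?case by (simp add: rprod_Nil mat_eq_def matmul_idmat_left)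
next
  case (Cons k ks)
  have "mat_eq n (rprod n v ((k # ks) @ ls))
          (matmul n (rfactor v k) (matmul n (rprod n v ks) (rprod n v ls)))"
    unfolding append_Cons rprod_Cons by (rule matmul_cong[OF mat_eq_refl Cons.IH])
  then show ?case by (simp add: rprod_Cons matmul_assoc)
qed

lemma upper_triangular_rfactor: "upper_triangular n (rfactor v k)"
  by (simp add: upper_triangular_def rfactor_def rmat_def idmat_def)

lemma upper_triangular_rprod: "upper_triangular n (rprod n v ks)"
  by (induction ks)
    (auto simp: rprod_Nil rprod_Cons upper_triangular_idmat upper_triangular_rfactor
      upper_triangular_matmul)

lemma rprod_diag:
  "a < n \<Longrightarrow> rprod n v ks a a = (\<Prod>k\<leftarrow>ks. v (Rv a a) - v (Rv k k))"
proof (induction ks)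
  case Nil
  then show ?case by (simp add: rprod_Nil idmat_def)
next
  case (Cons k ks)
  then show ?case
    by (simp add: rprod_Cons matmul_diag[OF upper_triangular_rfactor upper_triangular_rprod])
      (simp add: rfactor_def rmat_def idmat_def)
qed

text \<open>A blockwise Cayley-Hamilton theorem for triangular \<open>r\<close>.\<close>
lemma rprod_upt_block_zero:
  "a \<le> x \<Longrightarrow> x < n \<Longrightarrow> c < b \<Longrightarrow> c < n \<Longrightarrow> rprod n v [a..<b] x c = 0"
proof (induction "b - a" arbitrary: a x)
  case 0
  then show ?case by (simp add: rprod_Nil idmat_def)
next
  case (Suc m)
  have upt: "[a..<b] = a # [Suc a..<b]" using Suc by (simp add: upt_conv_Cons)
  show ?case unfolding upt rprod_Cons matmul_def
  proof (intro sum.neutral ballI)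
    fix d assume d: "d \<in> {..<n}"
    consider "d < x" | "Suc a \<le> d" | "d = a" "x = a" using Suc.prems by linarith
    then show "rfactor v a x d * rprod n v [Suc a..<b] d c = 0"
    proof cases
      case 1
      then show ?thesis using upper_triangular_rfactor[of n v a] d Suc.prems
        unfolding upper_triangular_def by auto
    next
      case 2
      then show ?thesis using Suc d by auto
    qed (simp add: rfactor_def rmat_def idmat_def)
  qed
qed

lemma filter_neq_upt:
  "io < n \<Longrightarrow> filter (\<lambda>k. k \<noteq> io) [0..<n] = [0..<io] @ [Suc io..<n]"
proof -
  assume "io < n"
  then have "[0..<n] = [0..<io] @ io # [Suc io..<n]"
    using upt_add_eq_append[of 0 io "n - io"] by (simp add: upt_conv_Cons)
  then show ?thesis by (simp add: filter_True)
qed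

lemma upt_split: "io \<le> n \<Longrightarrow> [0..<io] @ [io..<n] = [0..<n]"
  using upt_add_eq_append[of 0 io "n - io"] by simp

text \<open>\<open>P\<^sup>\<iota>\<close> has rank one: the factors \<open>k < \<iota>\<close> kill everything but column \<open>\<iota>\<close>,
  the factors \<open>k > \<iota>\<close> everything but row \<open>\<iota>\<close>.\<close>
lemma Pmat_factor:
  assumes "io < n" "a < n" "b < n"
  shows "Pmat n io v a b = rprod n v [0..<io] a io * rprod n v [Suc io..<n] io b"
proof -
  have "Pmat n io v a b = matmul n (rprod n v [0..<io]) (rprod n v [Suc io..<n]) a b"
    using rprod_append[of n v "[0..<io]" "[Suc io..<n]"] assms
    by (simp add: Pmat_eq_rprod filter_neq_upt mat_eq_def)
  also have "\<dots> = rprod n v [0..<io] a io * rprod n v [Suc io..<n] io b"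
    unfolding matmul_def
  proof (rule sum_eq_single)
    fix d assume d: "d \<in> {..<n}" "d \<noteq> io"
    show "rprod n v [0..<io] a d * rprod n v [Suc io..<n] d b = 0"
    proof (cases "d < io")
      case True
      then show ?thesis using rprod_upt_block_zero[of 0 a n d io v] assms by simp
    next
      case False
      then show ?thesis using rprod_upt_block_zero[of "Suc io" d n b n v] assms d by simp
    qed
  qed (use assms in auto)
  finally show ?thesis .
qed

lemma Pmat_rank_one:
  "io < n \<Longrightarrow> a < n \<Longrightarrow> b < n \<Longrightarrow>
    Pmat n io v a b * Pmat n io v io io = Pmat n io v a io * Pmat n io v io b"
  by (simp add: Pmat_factor)

lemma Pmat_column_below: "io < a \<Longrightarrow> a < n \<Longrightarrow> Pmat n io v a io = 0"
  using upper_triangular_rprod[of n v "[0..<io]"] by (simp add: Pmat_factor upper_triangular_def)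

lemma Pmat_row_before: "b < io \<Longrightarrow> io < n \<Longrightarrow> Pmat n io v io b = 0"
  using upper_triangular_rprod[of n v "[Suc io..<n]"] by (simp add: Pmat_factor upper_triangular_def)

lemma Pmat_diag_zero: "a \<noteq> io \<Longrightarrow> a < n \<Longrightarrow> io < n \<Longrightarrow> Pmat n io v a a = 0"
  using upper_triangular_rprod[of n v "[Suc io..<n]"] upper_triangular_rprod[of n v "[0..<io]"]
  by (cases "a < io") (simp_all add: Pmat_factor upper_triangular_def)

lemma mtrace_Pmat: "io < n \<Longrightarrow> mtrace n (Pmat n io v) = Pmat n io v io io"
  unfolding mtrace_def by (rule sum_eq_single) (auto simp: Pmat_diag_zero)

lemma Pmat_diag:
  "io < n \<Longrightarrow> Pmat n io v io io = (\<Prod>k\<leftarrow>filter (\<lambda>k. k \<noteq> io) [0..<n]. v (Rv io io) - v (Rv k k))"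
  by (simp add: Pmat_eq_rprod rprod_diag)

lemma matmul_rfactor_left:
  assumes "a < n"
  shows "matmul n (rfactor v k) B a c = matmul n (rmat v) B a c - v (Rv k k) * B a c"
proof -
  have "matmul n (rfactor v k) B a c = matmul n (rmat v) B a c - v (Rv k k) * matmul n idmat B a c"
    by (simp add: matmul_def rfactor_def left_diff_distrib sum_subtractf sum_distrib_left mult.assoc)
  then show ?thesis using assms by (simp add: matmul_idmat_left)
qed

lemma matmul_rfactor_right:
  assumes "c < n"
  shows "matmul n A (rfactor v k) a c = matmul n A (rmat v) a c - v (Rv k k) * A a c"
proof -
  have "matmul n A (rfactor v k) a c = matmul n A (rmat v) a c - v (Rv k k) * matmul n A idmat a c"
    by (simp add: matmul_def rfactor_def right_diff_distrib sum_subtractf sum_distrib_left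
        mult.left_commute)
  then show ?thesis using assms by (simp add: matmul_idmat_right)
qed

lemma rfactor_commute:
  "mat_eq n (matmul n (rfactor v k) (rfactor v l)) (matmul n (rfactor v l) (rfactor v k))"
  unfolding mat_eq_def
  by (simp add: matmul_rfactor_left matmul_rfactor_right) (simp add: rfactor_def algebra_simps)

lemma rfactor_commute_rprod:
  "mat_eq n (matmul n (rfactor v k) (rprod n v ls)) (matmul n (rprod n v ls) (rfactor v k))"
proof (induction ls)
  case Nil
  show ?case by (simp add: rprod_Nil mat_eq_def matmul_idmat_left matmul_idmat_right)
next
  case (Cons l ls)
  let ?R = "rfactor v k" and ?S = "rfactor v l" and ?Q = "rprod n v ls"
  have "mat_eq n (matmul n ?R (matmul n ?S ?Q)) (matmul n (matmul n ?S ?R) ?Q)"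
    using matmul_cong[OF rfactor_commute mat_eq_refl, of n v k l ?Q] by (simp add: matmul_assoc)
  also have "mat_eq n \<dots> (matmul n ?S (matmul n ?Q ?R))"
    using matmul_cong[OF mat_eq_refl Cons.IH, of ?S] by (simp add: matmul_assoc)
  finally show ?case by (simp add: rprod_Cons matmul_assoc)
qed

lemma rfactor_Pmat_zero:
  assumes "io < n"
  shows "mat_eq n (matmul n (rfactor v io) (Pmat n io v)) (\<lambda>_ _. 0)"
proof -
  let ?A = "rprod n v [0..<io]" and ?B = "rprod n v [Suc io..<n]"
  have "mat_eq n (matmul n (rfactor v io) (Pmat n io v)) (matmul n (rfactor v io) (matmul n ?A ?B))"
    using rprod_append[of n v "[0..<io]" "[Suc io..<n]"] assms
    by (intro matmul_cong[OF mat_eq_refl]) (simp add: Pmat_eq_rprod filter_neq_upt)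
  also have "mat_eq n \<dots> (matmul n ?A (matmul n (rfactor v io) ?B))"
    using matmul_cong[OF rfactor_commute_rprod mat_eq_refl, of n v io "[0..<io]" ?B]
    by (simp add: matmul_assoc)
  also have "matmul n ?A (matmul n (rfactor v io) ?B) = matmul n ?A (rprod n v [io..<n])"
    using assms by (simp add: rprod_Cons upt_conv_Cons)
  also have "mat_eq n \<dots> (rprod n v [0..<n])"
    using mat_eq_sym[OF rprod_append[of n v "[0..<io]" "[io..<n]"]] assms
    by (simp add: upt_split)
  also have "mat_eq n (rprod n v [0..<n]) (\<lambda>_ _. 0)"
    unfolding mat_eq_def using rprod_upt_block_zero[of 0 _ n _ n v] by simp
  finally show ?thesis .
qed

lemma Pmat_rfactor_zero:
  assumes "io < n"
  shows "mat_eq n (matmul n (Pmat n io v) (rfactor v io)) (\<lambda>_ _. 0)"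
  using mat_eq_trans[OF mat_eq_sym[OF rfactor_commute_rprod] rfactor_Pmat_zero[OF assms, unfolded Pmat_eq_rprod]]
  by (simp add: Pmat_eq_rprod)

lemma Pmat_column_eigen:
  "k < n \<Longrightarrow> b < n \<Longrightarrow> matmul n (rmat v) (Pmat n k v) b k = v (Rv k k) * Pmat n k v b k"
  using rfactor_Pmat_zero[of k n v] by (simp add: mat_eq_def matmul_rfactor_left)

lemma Pmat_row_eigen:
  "t < n \<Longrightarrow> c < n \<Longrightarrow> matmul n (Pmat n t v) (rmat v) t c = v (Rv t t) * Pmat n t v t c"
  using Pmat_rfactor_zero[of t n v] by (simp add: mat_eq_def matmul_rfactor_right)

text \<open>A left eigenvector and a right eigenvector of \<open>r\<close> for distinct eigenvalues are orthogonal.\<close>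
lemma Pmat_orthogonal:
  assumes "t < n" "k < n" "v (Rv t t) \<noteq> v (Rv k k)"
  shows "(\<Sum>b<n. Pmat n t v t b * Pmat n k v b k) = 0"
proof -
  let ?S = "\<Sum>b<n. Pmat n t v t b * Pmat n k v b k"
  have "matmul n (Pmat n t v) (matmul n (rmat v) (Pmat n k v)) t k = v (Rv k k) * ?S"
    unfolding matmul_def[of n "Pmat n t v"]
    using Pmat_column_eigen[OF assms(2)] by (simp add: sum_distrib_left mult.left_commute)
  moreover have "matmul n (matmul n (Pmat n t v) (rmat v)) (Pmat n k v) t k = v (Rv t t) * ?S"
    unfolding matmul_def[of n "matmul n (Pmat n t v) (rmat v)"]
    using Pmat_row_eigen[OF assms(1)] by (simp add: sum_distrib_left mult.assoc)
  ultimately have "v (Rv k k) * ?S = v (Rv t t) * ?S"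
    by (simp only: matmul_assoc)
  then show ?thesis using assms(3) by auto
qed

section \<open>Regular functions on the regular semisimple locus\<close>

lemma polyfun_diff: "p \<in> polyfun \<Longrightarrow> q \<in> polyfun \<Longrightarrow> (\<lambda>v. p v - q v) \<in> polyfun"
  using padd[OF _ pmult[OF pconst[of "-1"]]] by fastforce

lemma polyfun_sum:
  "finite A \<Longrightarrow> (\<And>x. x \<in> A \<Longrightarrow> g x \<in> polyfun) \<Longrightarrow> (\<lambda>v. \<Sum>x\<in>A. g x v) \<in> polyfun"
proof (induction A rule: finite_induct)
  case empty
  then show ?case using pconst[of 0] by simp
next
  case (insert a A)
  then show ?case using padd[of "g a" "\<lambda>v. \<Sum>x\<in>A. g x v"] by simp
qed

lemma polyfun_prod:
  "finite A \<Longrightarrow> (\<And>x. x \<in> A \<Longrightarrow> g x \<in> polyfun) \<Longrightarrow> (\<lambda>v. \<Prod>x\<in>A. g x v) \<in> polyfun"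
proof (induction A rule: finite_induct)
  case empty
  then show ?case using pconst[of 1] by simp
next
  case (insert a A)
  then show ?case using pmult[of "g a" "\<lambda>v. \<Prod>x\<in>A. g x v"] by simp
qed

lemma polyfun_power: "p \<in> polyfun \<Longrightarrow> (\<lambda>v. p v ^ k) \<in> polyfun"
proof (induction k)
  case 0
  then show ?case using pconst[of 1] by simp
next
  case (Suc k)
  then show ?case using pmult[of p "\<lambda>v. p v ^ k"] by simp
qed

lemma polyfun_rmat: "(\<lambda>v. rmat v a c) \<in> polyfun"
  by (cases "a \<le> c") (simp_all add: rmat_def pvar pconst[of 0, simplified])

lemma polyfun_rfactor: "(\<lambda>v. rfactor v k a c) \<in> polyfun"
  unfolding rfactor_def by (intro polyfun_diff pmult polyfun_rmat pvar pconst)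

lemma polyfun_rprod: "(\<lambda>v. rprod n v ks a c) \<in> polyfun"
proof (induction ks arbitrary: a c)
  case Nil
  then show ?case by (simp add: rprod_Nil pconst)
next
  case (Cons k ks)
  then show ?case
    unfolding rprod_Cons matmul_def by (intro polyfun_sum pmult polyfun_rfactor) auto
qed

lemma polyfun_Pmat: "(\<lambda>v. Pmat n io v a c) \<in> polyfun"
  by (simp add: Pmat_eq_rprod polyfun_rprod)

lemma polyfun_diag_diff_prod:
  "finite S \<Longrightarrow> (\<lambda>v. \<Prod>(a, b)\<in>S. v (Rv a a) - v (Rv b b)) \<in> polyfun"
proof (rule polyfun_prod)
  fix x :: "nat \<times> nat"
  show "(\<lambda>v. case x of (a, b) \<Rightarrow> v (Rv a a) - v (Rv b b)) \<in> polyfun"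
    by (cases x) (simp add: polyfun_diff pvar)
qed

lemma finite_index_pairs: "finite {(a, b). a < b \<and> b < (n::nat)}"
  by (rule finite_subset[of _ "{..<n} \<times> {..<n}"]) auto

lemma polyfun_disc: "disc n \<in> polyfun"
  unfolding disc_def using polyfun_diag_diff_prod[OF finite_index_pairs] .

lemma disc_nonzero: "v \<in> Xrss n \<Longrightarrow> disc n v \<noteq> 0"
  unfolding disc_def Xrss_def using finite_index_pairs[of n] by (auto simp: prod_zero_iff)

lemma disc_remove_pair:
  assumes "a < b" "b < n"
  shows "disc n v = (v (Rv a a) - v (Rv b b)) *
    (\<Prod>(c, d)\<in>{(a, b). a < b \<and> b < n} - {(a, b)}. v (Rv c c) - v (Rv d d))"
  unfolding disc_def using assms finite_index_pairs[of n] by (subst prod.remove[of _ "(a, b)"]) auto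

lemma regular_fun_cong:
  "regular_fun n f \<Longrightarrow> (\<And>v. v \<in> Xrss n \<Longrightarrow> f v = g v) \<Longrightarrow> regular_fun n g"
  unfolding regular_fun_def by metis

lemma regular_fun_polyfun: "p \<in> polyfun \<Longrightarrow> regular_fun n p"
  unfolding regular_fun_def by (intro bexI[of _ p] exI[of _ 0]) auto

lemma regular_fun_const: "regular_fun n (\<lambda>v. c)"
  by (rule regular_fun_polyfun[OF pconst])

lemma regular_fun_var: "regular_fun n (\<lambda>v. v x)"
  by (rule regular_fun_polyfun[OF pvar])

lemma regular_funI:
  "p \<in> polyfun \<Longrightarrow> (\<And>v. v \<in> Xrss n \<Longrightarrow> f v = p v / disc n v ^ m) \<Longrightarrow> regular_fun n f"
  unfolding regular_fun_def by blast

lemma regular_fun_add: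
  assumes "regular_fun n f" "regular_fun n g"
  shows "regular_fun n (\<lambda>v. f v + g v)"
proof -
  obtain p m where p: "p \<in> polyfun" "\<And>v. v \<in> Xrss n \<Longrightarrow> f v = p v / disc n v ^ m"
    using assms(1) unfolding regular_fun_def by blast
  obtain q k where q: "q \<in> polyfun" "\<And>v. v \<in> Xrss n \<Longrightarrow> g v = q v / disc n v ^ k"
    using assms(2) unfolding regular_fun_def by blast
  show ?thesis
  proof (rule regular_funI)
    show "(\<lambda>v. p v * disc n v ^ k + q v * disc n v ^ m) \<in> polyfun"
      by (intro padd pmult p q polyfun_power polyfun_disc)
    show "f v + g v = (p v * disc n v ^ k + q v * disc n v ^ m) / disc n v ^ (m + k)"
      if "v \<in> Xrss n" for v
      using p(2)[OF that] q(2)[OF that] disc_nonzero[OF that] by (simp add: add_divide_distrib power_add)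
  qed
qed

lemma regular_fun_mult:
  assumes "regular_fun n f" "regular_fun n g"
  shows "regular_fun n (\<lambda>v. f v * g v)"
proof -
  obtain p m where p: "p \<in> polyfun" "\<And>v. v \<in> Xrss n \<Longrightarrow> f v = p v / disc n v ^ m"
    using assms(1) unfolding regular_fun_def by blast
  obtain q k where q: "q \<in> polyfun" "\<And>v. v \<in> Xrss n \<Longrightarrow> g v = q v / disc n v ^ k"
    using assms(2) unfolding regular_fun_def by blast
  show ?thesis
  proof (rule regular_funI)
    show "(\<lambda>v. p v * q v) \<in> polyfun" by (intro pmult p q)
    show "f v * g v = p v * q v / disc n v ^ (m + k)" if "v \<in> Xrss n" for v
      using p(2)[OF that] q(2)[OF that] by (simp add: power_add)
  qed
qed

lemma regular_fun_uminus: "regular_fun n f \<Longrightarrow> regular_fun n (\<lambda>v. - f v)"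
  using regular_fun_mult[OF regular_fun_const[of n "-1"]] by simp

lemma regular_fun_diff:
  "regular_fun n f \<Longrightarrow> regular_fun n g \<Longrightarrow> regular_fun n (\<lambda>v. f v - g v)"
  using regular_fun_add[OF _ regular_fun_uminus] by simp

lemma regular_fun_divide_disc_power:
  assumes "regular_fun n f"
  shows "regular_fun n (\<lambda>v. f v / disc n v ^ k)"
proof -
  obtain p m where p: "p \<in> polyfun" "\<And>v. v \<in> Xrss n \<Longrightarrow> f v = p v / disc n v ^ m"
    using assms unfolding regular_fun_def by blast
  show ?thesis
    by (rule regular_funI[OF p(1), of _ _ "m + k"]) (simp add: p(2) power_add)
qed

lemma regular_fun_sum:
  "finite A \<Longrightarrow> (\<And>x. x \<in> A \<Longrightarrow> regular_fun n (g x)) \<Longrightarrow> regular_fun n (\<lambda>v. \<Sum>x\<in>A. g x v)"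
proof (induction A rule: finite_induct)
  case empty
  then show ?case using regular_fun_const[of n 0] by simp
next
  case (insert a A)
  then show ?case using regular_fun_add[of n "g a" "\<lambda>v. \<Sum>x\<in>A. g x v"] by simp
qed

lemma regular_fun_inverse_disc_divisor:
  assumes "q \<in> polyfun" "\<And>v. v \<in> Xrss n \<Longrightarrow> p v * q v = disc n v"
  shows "regular_fun n (\<lambda>v. 1 / p v)"
proof (rule regular_funI[OF assms(1), of _ _ 1])
  fix v assume v: "v \<in> Xrss n"
  have "p v * q v \<noteq> 0" using assms(2)[OF v] disc_nonzero[OF v] by simp
  then show "1 / p v = q v / disc n v ^ 1" by (simp add: assms(2)[OF v, symmetric])
qed

lemma regular_fun_inverse_diag_diff:
  assumes "a < n" "b < n" "a \<noteq> b"
  shows "regular_fun n (\<lambda>v. 1 / (v (Rv a a) - v (Rv b b)))"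
proof -
  have ordered: "regular_fun n (\<lambda>v. 1 / (v (Rv c c) - v (Rv d d)))" if "c < d" "d < n" for c d
    using that
    by (intro regular_fun_inverse_disc_divisor[OF polyfun_diag_diff_prod[of "{(a, b). a < b \<and> b < n} - {(c, d)}"]])
      (simp_all add: finite_index_pairs disc_remove_pair[symmetric])
  show ?thesis
  proof (cases "a < b")
    case True
    then show ?thesis using ordered assms by blast
  next
    case False
    then have "regular_fun n (\<lambda>v. - (1 / (v (Rv b b) - v (Rv a a))))"
      using ordered assms by (intro regular_fun_uminus) auto
    then show ?thesis by (rule regular_fun_cong) (simp add: minus_divide_right)
  qed
qed

lemma regular_fun_inverse_Pmat_diag:
  assumes "io < n"
  shows "regular_fun n (\<lambda>v. 1 / Pmat n io v io io)"
proof -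
  have inverse_prod: "regular_fun n (\<lambda>v. 1 / (\<Prod>k\<leftarrow>ks. v (Rv io io) - v (Rv k k)))"
    if "set ks \<subseteq> {..<n} - {io}" for ks
    using that
  proof (induction ks)
    case Nil
    then show ?case using regular_fun_const[of n 1] by simp
  next
    case (Cons k ks)
    then have "regular_fun n (\<lambda>v. 1 / (v (Rv io io) - v (Rv k k)) *
        (1 / (\<Prod>k\<leftarrow>ks. v (Rv io io) - v (Rv k k))))"
      using assms by (intro regular_fun_mult regular_fun_inverse_diag_diff) auto
    then show ?case by (rule regular_fun_cong) simp
  qed
  show ?thesis unfolding Pmat_diag[OF assms] by (rule inverse_prod) auto
qed

lemma Pmat_diag_nonzero: "io < n \<Longrightarrow> v \<in> Xrss n \<Longrightarrow> Pmat n io v io io \<noteq> 0"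
  unfolding Pmat_diag Xrss_def by (auto simp: prod_list_zero_iff)

lemma Lmat_eq: "io < n \<Longrightarrow> Lmat n io v a b = Pmat n io v a b / Pmat n io v io io"
  by (simp add: Lmat_def mtrace_Pmat)

lemma regular_fun_Lmat:
  assumes "io < n"
  shows "regular_fun n (\<lambda>v. Lmat n io v a b)"
proof -
  have "regular_fun n (\<lambda>v. Pmat n io v a b * (1 / Pmat n io v io io))"
    by (intro regular_fun_mult regular_fun_inverse_Pmat_diag assms regular_fun_polyfun polyfun_Pmat)
  then show ?thesis by (rule regular_fun_cong) (simp add: Lmat_eq[OF assms])
qed

section \<open>The factorisation of \<open>F\<^sub>t\<close>\<close>

lemma Lmat_rank_one:
  assumes "t < n" "a < n" "c < n"
  shows "Lmat n t v a c = Lmat n t v a t * Lmat n t v t c"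
proof (cases "Pmat n t v t t = 0")
  case True
  then show ?thesis using assms by (simp add: Lmat_eq)
next
  case False
  then show ?thesis
    using Pmat_rank_one[OF assms] assms by (simp add: Lmat_eq field_simps power2_eq_square)
qed

lemma Lmat_diag: "t < n \<Longrightarrow> v \<in> Xrss n \<Longrightarrow> Lmat n t v t t = 1"
  using Pmat_diag_nonzero by (simp add: Lmat_eq)

lemma Lmat_column_below: "t < a \<Longrightarrow> a < n \<Longrightarrow> Lmat n t v a t = 0"
  by (simp add: Lmat_eq Pmat_column_below)

lemma Lmat_row_before: "b < t \<Longrightarrow> t < n \<Longrightarrow> Lmat n t v t b = 0"
  by (simp add: Lmat_eq Pmat_row_before)

lemma Lmat_orthogonal:
  assumes "t < n" "k < n" "t \<noteq> k" "v \<in> Xrss n"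
  shows "(\<Sum>b<n. Lmat n t v t b * Lmat n k v b k) = 0"
proof -
  have "v (Rv t t) \<noteq> v (Rv k k)" using assms unfolding Xrss_def by auto
  moreover have "(\<Sum>b<n. Lmat n t v t b * Lmat n k v b k) =
      (\<Sum>b<n. Pmat n t v t b * Pmat n k v b k) / (Pmat n t v t t * Pmat n k v k k)"
    using assms by (simp add: Lmat_eq sum_divide_distrib)
  ultimately show ?thesis using Pmat_orthogonal[OF assms(1,2)] by simp
qed

lemma Lmat_row_times_column:
  assumes "k < n" "v \<in> Xrss n"
  shows "(\<Sum>b<n. Lmat n k v k b * Lmat n k v b k) = 1"
proof -
  have "(\<Sum>b<n. Lmat n k v k b * Lmat n k v b k) = Lmat n k v k k * Lmat n k v k k"
  proof (rule sum_eq_single)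
    fix b assume "b \<in> {..<n}" "b \<noteq> k"
    then show "Lmat n k v k b * Lmat n k v b k = 0"
      using assms Lmat_row_before Lmat_column_below by (cases "b < k") auto
  qed (use assms in auto)
  then show ?thesis using Lmat_diag[OF assms] by simp
qed

lemma Lmat_cong:
  assumes "\<And>a b. v (Rv a b) = v' (Rv a b)"
  shows "Lmat n t v = Lmat n t v'"
proof -
  have "rmat v = rmat v'" using assms by (simp add: rmat_def fun_eq_iff)
  then have "Pmat n t v = Pmat n t v'" unfolding Pmat_def assms by simp
  then show ?thesis by (simp add: Lmat_def)
qed

definition Fj :: "nat \<Rightarrow> nat \<Rightarrow> point \<Rightarrow> complex" where
  "Fj n t v = (\<Sum>a<n. v (Jv a) * Lmat n t v a t)"

definition Fi :: "nat \<Rightarrow> nat \<Rightarrow> point \<Rightarrow> complex" where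
  "Fi n t v = (\<Sum>b<n. Lmat n t v t b * v (Iv b))"

lemma Ffun_eq_Fj_Fi:
  assumes "t < n"
  shows "Ffun n t v = Fj n t v * Fi n t v"
proof -
  have "Ffun n t v = (\<Sum>a<n. \<Sum>c<n. (v (Jv a) * Lmat n t v a t) * (Lmat n t v t c * v (Iv c)))"
    unfolding Ffun_def using Lmat_rank_one[OF assms]
    by (intro sum.cong refl) (simp add: mult.assoc mult.left_commute)
  also have "\<dots> = Fj n t v * Fi n t v"
    unfolding Fj_def Fi_def by (simp add: sum_product)
  finally show ?thesis .
qed

lemma regular_fun_Fj: "t < n \<Longrightarrow> regular_fun n (Fj n t)"
  unfolding Fj_def by (intro regular_fun_sum regular_fun_mult regular_fun_var regular_fun_Lmat) auto

lemma regular_fun_Fi: "t < n \<Longrightarrow> regular_fun n (Fi n t)"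
  unfolding Fi_def by (intro regular_fun_sum regular_fun_mult regular_fun_var regular_fun_Lmat) auto

lemma regular_fun_Ffun: "t < n \<Longrightarrow> regular_fun n (Ffun n t)"
  using regular_fun_mult[OF regular_fun_Fj regular_fun_Fi]
  by (rule regular_fun_cong) (simp_all add: Ffun_eq_Fj_Fi)

section \<open>Translations in the \<open>i\<close> and \<open>j\<close> directions\<close>

definition ij_field :: "nat \<Rightarrow> (point \<Rightarrow> var \<Rightarrow> complex) \<Rightarrow> bool" where
  "ij_field n Z \<longleftrightarrow> (\<forall>v\<in>Xrss n. \<forall>x. Z v x \<noteq> 0 \<longrightarrow> (\<exists>b<n. x = Iv b \<or> x = Jv b))"

definition shift :: "(point \<Rightarrow> complex) \<Rightarrow> (point \<Rightarrow> var \<Rightarrow> complex) \<Rightarrow> point \<Rightarrow> point" where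
  "shift c Z v = (\<lambda>x. v x + c v * Z v x)"

lemma shift_Rv: "ij_field n Z \<Longrightarrow> v \<in> Xrss n \<Longrightarrow> shift c Z v (Rv a b) = v (Rv a b)"
  unfolding ij_field_def shift_def by (cases "Z v (Rv a b) = 0") auto

lemma shift_in_Xrss:
  assumes "ij_field n Z" "v \<in> Xrss n"
  shows "shift c Z v \<in> Xrss n"
proof -
  have "shift c Z v x = 0" if "\<not> valid_var n x" for x
  proof -
    have "Z v x = 0" using assms that unfolding ij_field_def by force
    moreover have "v x = 0" using assms(2) that unfolding Xrss_def by auto
    ultimately show ?thesis by (simp add: shift_def)
  qed
  then show ?thesis using assms(2) shift_Rv[OF assms] unfolding Xrss_def by auto
qed

lemma disc_shift: "ij_field n Z \<Longrightarrow> v \<in> Xrss n \<Longrightarrow> disc n (shift c Z v) = disc n v"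
  unfolding disc_def by (simp add: shift_Rv)

lemma Lmat_shift: "ij_field n Z \<Longrightarrow> v \<in> Xrss n \<Longrightarrow> Lmat n t (shift c Z v) = Lmat n t v"
  by (rule Lmat_cong) (simp add: shift_Rv)

lemma Fj_shift:
  assumes "ij_field n Z" "v \<in> Xrss n"
  shows "Fj n t (shift c Z v) = Fj n t v + c v * (\<Sum>a<n. Z v (Jv a) * Lmat n t v a t)"
  unfolding Fj_def Lmat_shift[OF assms]
  by (simp add: shift_def algebra_simps sum.distrib sum_distrib_left)

lemma Fi_shift:
  assumes "ij_field n Z" "v \<in> Xrss n"
  shows "Fi n t (shift c Z v) = Fi n t v + c v * (\<Sum>b<n. Lmat n t v t b * Z v (Iv b))"
  unfolding Fi_def Lmat_shift[OF assms]
  by (simp add: shift_def algebra_simps sum.distrib sum_distrib_left)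

lemma polyfun_shift_difference:
  assumes c: "regular_fun n c" and Z: "\<And>x. regular_fun n (\<lambda>v. Z v x)" and p: "p \<in> polyfun"
  shows "\<exists>q. regular_fun n q \<and> (\<forall>v. p (shift c Z v) = p v + c v * q v)"
  using p
proof (induction rule: polyfun.induct)
  case (pconst a)
  show ?case by (intro exI[of _ "\<lambda>v. 0"]) (simp add: regular_fun_const)
next
  case (pvar x)
  show ?case by (intro exI[of _ "\<lambda>v. Z v x"]) (simp add: shift_def Z)
next
  case (padd p1 p2)
  then obtain q1 q2 where "regular_fun n q1" "\<forall>v. p1 (shift c Z v) = p1 v + c v * q1 v"
      "regular_fun n q2" "\<forall>v. p2 (shift c Z v) = p2 v + c v * q2 v" by blast
  then show ?case
    by (intro exI[of _ "\<lambda>v. q1 v + q2 v"]) (simp add: regular_fun_add algebra_simps)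
next
  case (pmult p1 p2)
  then obtain q1 q2 where q: "regular_fun n q1" "\<forall>v. p1 (shift c Z v) = p1 v + c v * q1 v"
      "regular_fun n q2" "\<forall>v. p2 (shift c Z v) = p2 v + c v * q2 v" by blast
  have "regular_fun n (\<lambda>v. q1 v * p2 v + p1 v * q2 v + c v * (q1 v * q2 v))"
    by (intro regular_fun_add regular_fun_mult c q(1) q(3)
        regular_fun_polyfun[OF pmult.hyps(1)] regular_fun_polyfun[OF pmult.hyps(2)])
  then show ?case
    using q by (intro exI[of _ "\<lambda>v. q1 v * p2 v + p1 v * q2 v + c v * (q1 v * q2 v)"])
      (simp add: algebra_simps)
qed

lemma regular_fun_shift_difference:
  assumes "ij_field n Z" "regular_fun n c" "\<And>x. regular_fun n (\<lambda>v. Z v x)" "regular_fun n f"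
  shows "\<exists>q. regular_fun n q \<and> (\<forall>v\<in>Xrss n. f (shift c Z v) = f v + c v * q v)"
proof -
  obtain p m where p: "p \<in> polyfun" "\<forall>v\<in>Xrss n. f v = p v / disc n v ^ m"
    using assms(4) unfolding regular_fun_def by blast
  obtain q where q: "regular_fun n q" "\<forall>v. p (shift c Z v) = p v + c v * q v"
    using polyfun_shift_difference[of n c Z p] assms(2,3) p(1) by blast
  have "f (shift c Z v) = f v + c v * (q v / disc n v ^ m)" if "v \<in> Xrss n" for v
    using p(2) q(2) shift_in_Xrss[OF assms(1) that] disc_shift[OF assms(1) that] that
    by (simp add: add_divide_distrib)
  then show ?thesis using regular_fun_divide_disc_power[OF q(1)] by blast
qed

definition jdir :: "nat \<Rightarrow> point \<Rightarrow> var \<Rightarrow> complex" where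
  "jdir k = (\<lambda>v x. if x = Jv k then 1 else 0)"

definition idir :: "nat \<Rightarrow> nat \<Rightarrow> point \<Rightarrow> var \<Rightarrow> complex" where
  "idir n k = (\<lambda>v x. case x of Iv b \<Rightarrow> if b < n then Lmat n k v b k else 0 | _ \<Rightarrow> 0)"

lemma ij_field_jdir: "k < n \<Longrightarrow> ij_field n (jdir k)"
  unfolding ij_field_def jdir_def by auto

lemma ij_field_idir: "ij_field n (idir n k)"
  unfolding ij_field_def idir_def by (auto split: var.splits if_splits)

lemma regular_fun_jdir: "regular_fun n (\<lambda>v. jdir k v x)"
  unfolding jdir_def by (rule regular_fun_const)

lemma regular_fun_idir:
  assumes "k < n"
  shows "regular_fun n (\<lambda>v. idir n k v x)"
proof (cases x)
  case (Iv b)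
  then show ?thesis
    using assms unfolding idir_def by (cases "b < n") (simp_all add: regular_fun_Lmat regular_fun_const)
qed (simp_all add: idir_def regular_fun_const)

lemma sum_jdir_J: "k < n \<Longrightarrow> (\<Sum>a<n. jdir k v (Jv a) * f a) = f k"
  unfolding jdir_def by (subst sum_eq_single[of _ k]) auto

lemma sum_jdir_I: "(\<Sum>b<n. f b * jdir k v (Iv b)) = 0"
  unfolding jdir_def by simp

lemma sum_idir_J: "(\<Sum>a<n. idir n k v (Jv a) * f a) = 0"
  unfolding idir_def by simp

lemma sum_idir_I: "(\<Sum>b<n. f b * idir n k v (Iv b)) = (\<Sum>b<n. f b * Lmat n k v b k)"
  unfolding idir_def by (intro sum.cong) auto

text \<open>Projections onto the two components \<open>Fj n k = 0\<close> and \<open>Fi n k = 0\<close> of \<open>Ffun n k = 0\<close>.\<close>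
definition jproj :: "nat \<Rightarrow> nat \<Rightarrow> point \<Rightarrow> point" where
  "jproj n k = shift (\<lambda>v. - Fj n k v) (jdir k)"

definition iproj :: "nat \<Rightarrow> nat \<Rightarrow> point \<Rightarrow> point" where
  "iproj n k = shift (\<lambda>v. - Fi n k v) (idir n k)"

lemma jproj_in_Xrss: "k < n \<Longrightarrow> v \<in> Xrss n \<Longrightarrow> jproj n k v \<in> Xrss n"
  unfolding jproj_def by (rule shift_in_Xrss[OF ij_field_jdir])

lemma iproj_in_Xrss: "v \<in> Xrss n \<Longrightarrow> iproj n k v \<in> Xrss n"
  unfolding iproj_def by (rule shift_in_Xrss[OF ij_field_idir])

lemma Fj_jproj:
  "t \<le> k \<Longrightarrow> k < n \<Longrightarrow> v \<in> Xrss n \<Longrightarrow> Fj n t (jproj n k v) = (if t = k then 0 else Fj n t v)"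
  unfolding jproj_def
  by (auto simp: Fj_shift ij_field_jdir sum_jdir_J Lmat_diag Lmat_column_below)

lemma Fi_jproj: "k < n \<Longrightarrow> v \<in> Xrss n \<Longrightarrow> Fi n t (jproj n k v) = Fi n t v"
  unfolding jproj_def by (simp add: Fi_shift ij_field_jdir sum_jdir_I)

lemma Fj_iproj: "v \<in> Xrss n \<Longrightarrow> Fj n t (iproj n k v) = Fj n t v"
  unfolding iproj_def by (simp add: Fj_shift ij_field_idir sum_idir_J)

lemma Fi_iproj:
  "t \<le> k \<Longrightarrow> k < n \<Longrightarrow> v \<in> Xrss n \<Longrightarrow> Fi n t (iproj n k v) = (if t = k then 0 else Fi n t v)"
  unfolding iproj_def
  by (auto simp: Fi_shift ij_field_idir sum_idir_I Lmat_row_times_column Lmat_orthogonal)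

lemma Ffun_jproj:
  "t \<le> k \<Longrightarrow> k < n \<Longrightarrow> v \<in> Xrss n \<Longrightarrow> Ffun n t (jproj n k v) = (if t = k then 0 else Ffun n t v)"
  by (simp add: Ffun_eq_Fj_Fi Fj_jproj Fi_jproj)

lemma Ffun_iproj:
  "t \<le> k \<Longrightarrow> k < n \<Longrightarrow> v \<in> Xrss n \<Longrightarrow> Ffun n t (iproj n k v) = (if t = k then 0 else Ffun n t v)"
  by (simp add: Ffun_eq_Fj_Fi Fj_iproj Fi_iproj)

section \<open>\<open>F\<^sub>k\<close> is not a zero divisor\<close>

lemma polyfun_continuous_on_line:
  "p \<in> polyfun \<Longrightarrow> continuous_on UNIV (\<lambda>s::complex. p (\<lambda>x. v x + s * D x))"
  by (induction rule: polyfun.induct) (auto intro!: continuous_intros)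

lemma continuous_vanishing_off_finite:
  fixes f :: "complex \<Rightarrow> complex"
  assumes "continuous_on UNIV f" "finite S" "\<And>s. s \<notin> S \<Longrightarrow> f s = 0"
  shows "f z = 0"
proof -
  have "(f \<longlongrightarrow> f z) (at z)"
    using assms(1) by (simp add: continuous_on_eq_continuous_at isCont_def)
  moreover have "eventually (\<lambda>s. \<forall>y\<in>S. s \<noteq> y) (at z)"
    using assms(2) by (rule eventually_ball_finite) (simp add: eventually_neq_at_within)
  then have "eventually (\<lambda>s. 0 = f s) (at z)"
    by (rule eventually_mono) (use assms(3) in auto)
  then have "(f \<longlongrightarrow> 0) (at z)"
    by (rule Lim_transform_eventually[OF tendsto_const])
  ultimately show ?thesis by (rule tendsto_unique[OF at_neq_bot])
qed

text \<open>Along the line \<open>v + s D\<close>, \<open>D = jdir k v + idir n k v\<close>, both \<open>Fj n k\<close> and \<open>Fi n k\<close>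
  grow by \<open>s\<close>, so \<open>Ffun n k\<close> has only two zeros on it.\<close>
lemma regular_fun_zero_of_mult_Ffun:
  assumes k: "k < n" and e: "regular_fun n e"
    and annihilates: "\<And>w. w \<in> Xrss n \<Longrightarrow> e w * Ffun n k w = 0"
    and v: "v \<in> Xrss n"
  shows "e v = 0"
proof -
  obtain p m where p: "p \<in> polyfun" "\<forall>w\<in>Xrss n. e w = p w / disc n w ^ m"
    using e unfolding regular_fun_def by blast
  define D where "D x = jdir k v x + idir n k v x" for x
  have field: "ij_field n (\<lambda>_. D)"
    unfolding ij_field_def D_def jdir_def idir_def using k by (auto split: var.splits if_splits)
  have off_line_zeros: "p (\<lambda>x. v x + s * D x) = 0" if s: "s \<notin> {- Fj n k v, - Fi n k v}" for s
  proof -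
    let ?w = "shift (\<lambda>_. s) (\<lambda>_. D) v"
    have w: "?w \<in> Xrss n" by (rule shift_in_Xrss[OF field v])
    have "Fj n k ?w = Fj n k v + s"
      using Lmat_diag[OF k v] k
      by (simp add: Fj_shift[OF field v] D_def sum.distrib distrib_right sum_jdir_J sum_idir_J)
    moreover have "Fi n k ?w = Fi n k v + s"
      using Lmat_row_times_column[OF k v]
      by (simp add: Fi_shift[OF field v] D_def sum.distrib distrib_left sum_jdir_I sum_idir_I)
    ultimately have F: "Ffun n k ?w \<noteq> 0"
      using s k by (auto simp: Ffun_eq_Fj_Fi add_eq_0_iff)
    have "e ?w = 0" using annihilates[OF w] F by simp
    then have "p ?w / disc n ?w ^ m = 0" using p(2) w by simp
    then show ?thesis using disc_nonzero[OF w] by (simp add: shift_def)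
  qed
  have "p (\<lambda>x. v x + 0 * D x) = 0"
    by (rule continuous_vanishing_off_finite[where S = "{- Fj n k v, - Fi n k v}",
          OF polyfun_continuous_on_line[OF p(1)] _ off_line_zeros]) simp_all
  then show ?thesis using p(2) v by simp
qed

lemma second_difference_factor:
  assumes k: "k < n" and a: "regular_fun n a"
  shows "\<exists>q. regular_fun n q \<and> (\<forall>v\<in>Xrss n.
    a v - a (jproj n k v) - a (iproj n k v) + a (jproj n k (iproj n k v)) = Ffun n k v * q v)"
proof -
  obtain q1 where q1: "regular_fun n q1" "\<forall>v\<in>Xrss n. a (jproj n k v) = a v + - Fj n k v * q1 v"
    using regular_fun_shift_difference[where Z = "jdir k", OF ij_field_jdir[OF k]
        regular_fun_uminus[OF regular_fun_Fj[OF k]] regular_fun_jdir a]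
    unfolding jproj_def by blast
  obtain q2 where q2: "regular_fun n q2" "\<forall>v\<in>Xrss n. q1 (iproj n k v) = q1 v + - Fi n k v * q2 v"
    using regular_fun_shift_difference[where Z = "idir n k", OF ij_field_idir
        regular_fun_uminus[OF regular_fun_Fi[OF k]] regular_fun_idir[OF k] q1(1)]
    unfolding iproj_def by blast
  have "a v - a (jproj n k v) - a (iproj n k v) + a (jproj n k (iproj n k v)) = Ffun n k v * q2 v"
    if v: "v \<in> Xrss n" for v
  proof -
    have \<sigma>: "a (jproj n k v) = a v - Fj n k v * q1 v"
      using q1(2) v by simp
    have \<sigma>\<tau>: "a (jproj n k (iproj n k v)) = a (iproj n k v) - Fj n k v * (q1 v - Fi n k v * q2 v)"
      using q1(2) q2(2) iproj_in_Xrss[OF v] Fj_iproj[OF v] v by simp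
    show ?thesis by (simp only: \<sigma> \<sigma>\<tau>) (simp add: Ffun_eq_Fj_Fi[OF k] algebra_simps)
  qed
  then show ?thesis using q2(1) by blast
qed

lemma relation_coeffs_vanish:
  assumes rel: "\<forall>w\<in>Xrss n. g w * Ffun n k w = (\<Sum>t<k. a t w * Ffun n t w)"
    and w: "w \<in> Xrss n" "Ffun n k w = 0" "\<And>t. t < k \<Longrightarrow> Ffun n t w = Ffun n t v"
  shows "(\<Sum>t<k. a t w * Ffun n t v) = 0"
proof -
  have "(\<Sum>t<k. a t w * Ffun n t v) = (\<Sum>t<k. a t w * Ffun n t w)"
    using w(3) by simp
  also have "\<dots> = g w * Ffun n k w" using rel w(1) by simp
  also have "\<dots> = 0" using w(2) by simp
  finally show ?thesis .
qed

text \<open>The three translated points lie on \<open>Ffun n k = 0\<close> and share \<open>Ffun n t\<close>, \<open>t < k\<close>, with \<open>v\<close>.\<close>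
lemma relation_second_difference:
  assumes k: "k < n" and rel: "\<forall>w\<in>Xrss n. g w * Ffun n k w = (\<Sum>t<k. a t w * Ffun n t w)"
    and v: "v \<in> Xrss n"
  shows "(\<Sum>t<k. (a t v - a t (jproj n k v) - a t (iproj n k v) + a t (jproj n k (iproj n k v)))
      * Ffun n t v) = g v * Ffun n k v"
proof -
  let ?\<sigma> = "jproj n k" and ?\<tau> = "iproj n k"
  have \<tau>v: "?\<tau> v \<in> Xrss n" by (rule iproj_in_Xrss[OF v])
  have "(\<Sum>t<k. a t (?\<sigma> v) * Ffun n t v) = 0"
    by (rule relation_coeffs_vanish[OF rel]) (simp_all add: jproj_in_Xrss Ffun_jproj k v)
  moreover have "(\<Sum>t<k. a t (?\<tau> v) * Ffun n t v) = 0"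
    by (rule relation_coeffs_vanish[OF rel]) (simp_all add: \<tau>v Ffun_iproj k v)
  moreover have "(\<Sum>t<k. a t (?\<sigma> (?\<tau> v)) * Ffun n t v) = 0"
    by (rule relation_coeffs_vanish[OF rel])
      (simp_all add: jproj_in_Xrss Ffun_jproj Ffun_iproj \<tau>v k v)
  ultimately show ?thesis
    using rel v by (simp add: algebra_simps sum.distrib sum_subtractf)
qed

lemma Ffun_regular_element:
  assumes k: "k < n" and g: "regular_fun n g"
    and gF: "in_ideal n (Ffun n) k (\<lambda>v. g v * Ffun n k v)"
  shows "in_ideal n (Ffun n) k g"
proof -
  let ?\<sigma> = "jproj n k" and ?\<tau> = "iproj n k"
  obtain a where a: "\<forall>t<k. regular_fun n (a t)"
      "\<forall>v\<in>Xrss n. g v * Ffun n k v = (\<Sum>t<k. a t v * Ffun n t v)"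
    using gF unfolding in_ideal_def by blast
  have "\<forall>t<k. \<exists>q. regular_fun n q \<and> (\<forall>v\<in>Xrss n.
      a t v - a t (?\<sigma> v) - a t (?\<tau> v) + a t (?\<sigma> (?\<tau> v)) = Ffun n k v * q v)"
    using second_difference_factor[OF k] a(1) by blast
  then obtain q where q: "\<forall>t<k. regular_fun n (q t)" "\<forall>t<k. \<forall>v\<in>Xrss n.
      a t v - a t (?\<sigma> v) - a t (?\<tau> v) + a t (?\<sigma> (?\<tau> v)) = Ffun n k v * q t v"
    by metis
  define e where "e v = g v - (\<Sum>t<k. q t v * Ffun n t v)" for v
  have annihilates: "e v * Ffun n k v = 0" if v: "v \<in> Xrss n" for v
  proof -
    have "(\<Sum>t<k. q t v * Ffun n t v) * Ffun n k v = (\<Sum>t<k. (Ffun n k v * q t v) * Ffun n t v)"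
      by (subst sum_distrib_right) (simp add: mult_ac)
    also have "\<dots> =
      (\<Sum>t<k. (a t v - a t (?\<sigma> v) - a t (?\<tau> v) + a t (?\<sigma> (?\<tau> v))) * Ffun n t v)"
      using q(2) v by simp
    also have "\<dots> = g v * Ffun n k v"
      by (rule relation_second_difference[OF k a(2) v])
    finally show ?thesis by (auto simp: e_def left_diff_distrib)
  qed
  have "regular_fun n e"
    unfolding e_def using k g q(1)
    by (intro regular_fun_diff regular_fun_sum regular_fun_mult regular_fun_Ffun) auto
  then have "\<forall>v\<in>Xrss n. e v = 0"
    using regular_fun_zero_of_mult_Ffun[OF k _ annihilates] by blast
  then have "\<forall>v\<in>Xrss n. g v = (\<Sum>t<k. q t v * Ffun n t v)"
    by (simp add: e_def)
  then show ?thesis unfolding in_ideal_def using q(1) by blast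
qed

lemma one_not_in_ideal_of_common_zero:
  assumes "w \<in> Xrss n" "\<And>t. t < m \<Longrightarrow> F t w = 0"
  shows "\<not> in_ideal n F m (\<lambda>v. 1)"
  using assms unfolding in_ideal_def by fastforce

definition base_point :: "nat \<Rightarrow> point" where
  "base_point n = (\<lambda>x. case x of Rv a b \<Rightarrow> if a = b \<and> a < n then of_nat a else 0 | _ \<Rightarrow> 0)"

lemma base_point_in_Xrss: "base_point n \<in> Xrss n"
  unfolding Xrss_def base_point_def by (auto split: var.splits)

lemma Ffun_base_point: "Ffun n t (base_point n) = 0"
  unfolding Ffun_def base_point_def by simp

theorem mainTheorem14:
  fixes n :: nat
  shows "regular_sequence n (Ffun n) n"
proof -
  have "\<not> in_ideal n (Ffun n) n (\<lambda>v. 1)"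
    by (rule one_not_in_ideal_of_common_zero[OF base_point_in_Xrss]) (rule Ffun_base_point)
  then show ?thesis
    unfolding regular_sequence_def using regular_fun_Ffun Ffun_regular_element by blast
qed

end
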